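(* Let $(\delta_n)$ be a positive sequence with $\log(\delta_n)/\log n\to0$, and let $\beta=\beta_n\ge0$ with $n\log(n)\beta_n\to0$. Set $a_n=\delta_n\sqrt{2\log n}$ and $b_n=\sqrt{2\log n}-\frac{\log\log n+2\log\delta_n+\log(4\pi)}{2\sqrt{2\log n}}$. Fix $x\in\mathbb{R}$. Then $$n\beta\;\mathbb{E}_{P_{n,\beta}}\Big|\log\Big|1+\frac{x}{a_nb_n}-\frac{\lambda_1}{b_n}\Big|\Big|\xrightarrow[n\to\infty]{}0.$$
   Context: $P_{n,\beta}$ denotes the law on $\mathbb{R}^n$ of $(\lambda_1,\dots,\lambda_n)$ with density $\frac{1}{Z_{n,\beta}}\exp(-\frac12\sum_{i=1}^n\lambda_i^2)\prod_{1\le i<j\le n}|\lambda_i-\lambda_j|^\beta$ with respect to Lebesgue measure, $Z_{n,\beta}$ being the normalizing constant. *)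

theory Defs
  imports "HOL-Analysis.Analysis"
begin

text \<open>Points of R^n are represented as functions nat => real on the index set {..<n}
  (coordinates lambda_1..lambda_n are the values at 0..n-1), with the product
  Lebesgue measure PiM {..<n} (\<lambda>_. lborel).\<close>

definition gauss_space :: "nat \<Rightarrow> (nat \<Rightarrow> real) measure" where
  "gauss_space n = PiM {..<n} (\<lambda>_. lborel)"

definition beta_dens :: "nat \<Rightarrow> real \<Rightarrow> (nat \<Rightarrow> real) \<Rightarrow> real" where
  "beta_dens n \<beta> l =
     exp (- (1/2) * (\<Sum>i<n. (l i)\<^sup>2)) *
     (\<Prod>(i,j)\<in>{(i,j). i < j \<and> j < n}. \<bar>l i - l j\<bar> powr \<beta>)"

definition beta_Z :: "nat \<Rightarrow> real \<Rightarrow> ennreal" where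
  "beta_Z n \<beta> = (\<integral>\<^sup>+ l. ennreal (beta_dens n \<beta> l) \<partial>gauss_space n)"

definition beta_expect :: "nat \<Rightarrow> real \<Rightarrow> ((nat \<Rightarrow> real) \<Rightarrow> real) \<Rightarrow> ennreal" where
  "beta_expect n \<beta> g =
     (\<integral>\<^sup>+ l. ennreal (g l * beta_dens n \<beta> l) \<partial>gauss_space n) / beta_Z n \<beta>"

end

theory Submission
  imports Defs "HOL-Probability.Probability" "HOL-Real_Asymp.Real_Asymp"
begin

(* Conditionally on lambda_2, ..., lambda_n = c_j, the coordinate lambda_1 has density proportional
   to phi(y) W(y), where phi is the standard normal density and W(y) = prod_j |y - c_j|^beta.  Since
   beta n is small, W is comparable to the constant P = prod_j (1 + |c_j|)^beta: W(y) <= P (1 + |y|)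
   pointwise, and integral phi W >= P / 2 because prod_j u_j^beta >= 1 + beta sum_j ln u_j, where
   ln u >= -2 / sqrt u has a singularity that is integrable against phi.  Hence the conditional
   expectation of |ln |u - y / b|| is at most a constant times
   integral phi(y) (1 + |y|) |ln |u - y / b|| dy = O(sqrt b + ln (1 + |u|)), which at the edge
   scaling is O(log n + |log delta_n|); multiplied by n beta this tends to 0. *)

lemma ln_ge_minus_two_div_sqrt:
  fixes u :: real
  assumes "0 < u"
  shows "- 2 / sqrt u \<le> ln u"
proof -
  have "ln (1 / sqrt u) \<le> 1 / sqrt u - 1"
    using assms by (intro ln_le_minus_one) auto
  moreover have "ln (1 / sqrt u) = - ln u / 2"
    using assms by (simp add: ln_div ln_sqrt)
  ultimately show ?thesis by simp
qed

lemma abs_ln_le_two_div_sqrt_plus_ln: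
  fixes s :: real
  assumes "0 < s"
  shows "\<bar>ln s\<bar> \<le> 2 / sqrt s + ln (1 + s)"
proof (cases "s < 1")
  case True
  then have "\<bar>ln s\<bar> = - ln s"
    using assms by simp
  moreover have "0 \<le> ln (1 + s)"
    using assms by simp
  ultimately show ?thesis
    using ln_ge_minus_two_div_sqrt[OF assms] by linarith
next
  case False
  then have "\<bar>ln s\<bar> = ln s" and "ln s \<le> ln (1 + s)"
    using assms by simp_all
  moreover have "0 \<le> 2 / sqrt s"
    using assms by simp
  ultimately show ?thesis by linarith
qed

lemma abs_ln_abs_diff_div_le:
  fixes b u y :: real
  assumes b: "1 \<le> b"
  shows "\<bar>ln \<bar>u - y / b\<bar>\<bar> \<le> 2 * sqrt b / sqrt \<bar>y - b * u\<bar> + ln (1 + \<bar>u\<bar>) + \<bar>y\<bar>"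
proof (cases "u = y / b")
  case True
  then show ?thesis using b by simp
next
  case False
  define s where "s = \<bar>u - y / b\<bar>"
  have s_pos: "0 < s" using False unfolding s_def by simp
  have "s = \<bar>y - b * u\<bar> / b"
    using b unfolding s_def by (simp add: field_simps abs_minus_commute)
  then have two_div_sqrt: "2 / sqrt s = 2 * sqrt b / sqrt \<bar>y - b * u\<bar>"
    using b by (simp add: real_sqrt_divide)
  have "1 + s \<le> (1 + \<bar>u\<bar>) * (1 + \<bar>y\<bar>)"
  proof -
    have "\<bar>y\<bar> / b \<le> \<bar>y\<bar>"
      using b by (simp add: divide_le_eq mult_le_cancel_left1)
    then have "s \<le> \<bar>u\<bar> + \<bar>y\<bar>"
      using abs_triangle_ineq4[of u "y / b"] b unfolding s_def by simp
    then show ?thesis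
      by (simp add: algebra_simps) (smt (verit) abs_ge_zero mult_nonneg_nonneg)
  qed
  then have "ln (1 + s) \<le> ln ((1 + \<bar>u\<bar>) * (1 + \<bar>y\<bar>))"
    using s_pos by simp
  also have "\<dots> = ln (1 + \<bar>u\<bar>) + ln (1 + \<bar>y\<bar>)"
    by (intro ln_mult_pos) (auto intro: add_pos_nonneg)
  also have "ln (1 + \<bar>y\<bar>) \<le> \<bar>y\<bar>"
    by (rule ln_add_one_self_le_self) simp
  finally show ?thesis
    using abs_ln_le_two_div_sqrt_plus_ln[OF s_pos] unfolding s_def two_div_sqrt[unfolded s_def]
    by linarith
qed

lemma one_le_prod_powr_plus_sum:
  fixes w :: "'a \<Rightarrow> real"
  assumes J: "finite J" and \<beta>: "0 \<le> \<beta>" and w: "\<And>j. j \<in> J \<Longrightarrow> 0 < w j"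
  shows "1 \<le> (\<Prod>j\<in>J. w j powr \<beta>) + (\<Sum>j\<in>J. 2 * \<beta> / sqrt (w j))"
proof -
  have "- (2 * \<beta> / sqrt (w j)) \<le> \<beta> * ln (w j)" if "j \<in> J" for j
    using mult_left_mono[OF ln_ge_minus_two_div_sqrt[OF w[OF that]] \<beta>] by (simp add: mult_ac)
  then have "1 - (\<Sum>j\<in>J. 2 * \<beta> / sqrt (w j)) \<le> 1 + (\<Sum>j\<in>J. \<beta> * ln (w j))"
    using sum_mono[of J "\<lambda>j. - (2 * \<beta> / sqrt (w j))"] by (simp add: sum_negf)
  also have "\<dots> \<le> exp (\<Sum>j\<in>J. \<beta> * ln (w j))"
    by (rule exp_ge_add_one_self)
  also have "\<dots> = (\<Prod>j\<in>J. exp (\<beta> * ln (w j)))"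
    using J by (simp add: exp_sum)
  also have "\<dots> = (\<Prod>j\<in>J. w j powr \<beta>)"
    using w by (intro prod.cong) (simp_all add: powr_def mult.commute less_imp_neq[symmetric])
  finally show ?thesis by simp
qed

lemma std_normal_density_mult_one_plus_abs_sq_le:
  "std_normal_density y * (1 + \<bar>y\<bar>)\<^sup>2 \<le> 2"
proof -
  have "(1 + \<bar>y\<bar>)\<^sup>2 \<le> 4 * (1 + y\<^sup>2 / 2)"
    using abs_mult_self_eq[of y] sum_squares_ge_zero[of "\<bar>y\<bar> - 1" 0]
    by (simp add: power2_eq_square algebra_simps)
  also have "\<dots> \<le> 4 * exp (y\<^sup>2 / 2)"
    using exp_ge_add_one_self[of "y\<^sup>2 / 2"] by (intro mult_left_mono) auto
  finally have "std_normal_density y * (1 + \<bar>y\<bar>)\<^sup>2 \<le> 4 / sqrt (2 * pi)"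
    by (simp add: std_normal_density_def exp_minus field_simps)
  also have "\<dots> \<le> 2"
    using pi_gt3 by (simp add: divide_le_eq real_le_rsqrt)
  finally show ?thesis .
qed

lemma nn_integral_std_normal_density: "(\<integral>\<^sup>+y. ennreal (std_normal_density y) \<partial>lborel) = 1"
  by (simp add: nn_integral_eq_integral)

lemma nn_integral_std_normal_one_plus_abs_sq_le:
  "(\<integral>\<^sup>+y. ennreal (std_normal_density y * (1 + \<bar>y\<bar>)\<^sup>2) \<partial>lborel) \<le> 4"
proof -
  have density: "has_bochner_integral lborel std_normal_density 1"
    using std_normal_moment_even[of 0] by simp
  have moment: "has_bochner_integral lborel (\<lambda>y. std_normal_density y * y\<^sup>2) 1"
    using std_normal_moment_even[of 1] by (simp add: numeral_2_eq_2)
  have "has_bochner_integral lborel (\<lambda>y. 2 * std_normal_density y + 2 * (std_normal_density y * y\<^sup>2)) 4"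
    using has_bochner_integral_add[OF has_bochner_integral_mult_right[OF density, of 2]
        has_bochner_integral_mult_right[OF moment, of 2]]
    by (simp add: has_bochner_integral_iff)
  then have integral: "(\<integral>\<^sup>+y. ennreal (2 * std_normal_density y + 2 * (std_normal_density y * y\<^sup>2)) \<partial>lborel) = 4"
    by (subst nn_integral_eq_integral) (auto simp: has_bochner_integral_iff)
  have pointwise: "ennreal (std_normal_density y * (1 + \<bar>y\<bar>)\<^sup>2)
      \<le> ennreal (2 * std_normal_density y + 2 * (std_normal_density y * y\<^sup>2))" for y
  proof -
    have "(1 + \<bar>y\<bar>)\<^sup>2 \<le> 2 + 2 * y\<^sup>2"
      using abs_mult_self_eq[of y] sum_squares_ge_zero[of "\<bar>y\<bar> - 1" 0]
      by (simp add: power2_eq_square algebra_simps)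
    then have "std_normal_density y * (1 + \<bar>y\<bar>)\<^sup>2 \<le> std_normal_density y * (2 + 2 * y\<^sup>2)"
      by (intro mult_left_mono) auto
    then show ?thesis
      by (intro ennreal_leI) (simp add: algebra_simps)
  qed
  have "(\<integral>\<^sup>+y. ennreal (std_normal_density y * (1 + \<bar>y\<bar>)\<^sup>2) \<partial>lborel)
      \<le> (\<integral>\<^sup>+y. ennreal (2 * std_normal_density y + 2 * (std_normal_density y * y\<^sup>2)) \<partial>lborel)"
    by (rule nn_integral_mono) (rule pointwise)
  then show ?thesis
    unfolding integral .
qed

lemma nn_integral_indicator_inverse_sqrt_le:
  "(\<integral>\<^sup>+y. ennreal (indicator {v-1<..<v+1} y / sqrt \<bar>y - v\<bar>) \<partial>lborel) \<le> 4"
proof -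
  define g where "g x = indicator {0..1} x * x powr (-1/2)" for x :: real
  have g_nonneg: "0 \<le> g x" for x
    unfolding g_def by simp
  have "((\<lambda>x::real. x powr (-1/2)) has_integral 2) {0..1}"
    using has_integral_powr_from_0[of "-1/2" 1] by simp
  from nn_integral_has_integral_lebesgue[OF _ this]
  have g_int: "(\<integral>\<^sup>+x. ennreal (g x) \<partial>lborel) = 2"
    unfolding g_def by simp
  have "ennreal (indicator {v-1<..<v+1} y / sqrt \<bar>y - v\<bar>) \<le> ennreal (g (y - v)) + ennreal (g (v - y))"
    for y
  proof -
    have "indicator {v-1<..<v+1} y / sqrt \<bar>y - v\<bar> \<le> g (y - v) + g (v - y)"
      using g_nonneg[of "y - v"] g_nonneg[of "v - y"]
      by (cases "v \<le> y") (auto simp: g_def indicator_def powr_minus_divide powr_half_sqrt)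
    then show ?thesis
      using g_nonneg by (simp add: ennreal_plus[symmetric] del: ennreal_plus)
  qed
  then have "(\<integral>\<^sup>+y. ennreal (indicator {v-1<..<v+1} y / sqrt \<bar>y - v\<bar>) \<partial>lborel)
      \<le> (\<integral>\<^sup>+y. ennreal (g (y - v)) \<partial>lborel) + (\<integral>\<^sup>+y. ennreal (g (v - y)) \<partial>lborel)"
    by (subst nn_integral_add[symmetric]) (auto simp: g_def intro!: nn_integral_mono)
  also have "\<dots> = 4"
    using g_int nn_integral_real_affine[of "\<lambda>x. ennreal (g x)" 1 "-v"]
      nn_integral_real_affine[of "\<lambda>x. ennreal (g x)" "-1" v]
    by (simp add: g_def)
  finally show ?thesis .
qed

lemma std_normal_weighted_inverse_sqrt_le:
  "std_normal_density y * (1 + \<bar>y\<bar>) * sqrt (1 + \<bar>v\<bar>) / sqrt \<bar>y - v\<bar>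
    \<le> 2 * (std_normal_density y * (1 + \<bar>y\<bar>)\<^sup>2) + 4 * (indicator {v-1<..<v+1} y / sqrt \<bar>y - v\<bar>)"
proof -
  define a t where "a = 1 + \<bar>y\<bar>" and "t = \<bar>y - v\<bar>"
  have a_ge: "1 \<le> a" and t_nonneg: "0 \<le> t"
    unfolding a_def t_def by simp_all
  have v_le: "1 + \<bar>v\<bar> \<le> a + t"
    unfolding a_def t_def by linarith
  have M_eq: "std_normal_density y * a * (2 * a) = 2 * (std_normal_density y * (1 + \<bar>y\<bar>)\<^sup>2)"
    unfolding a_def by (simp add: power2_eq_square)
  show ?thesis
  proof (cases "t < 1")
    case True
    have "a \<le> a * a"
      using mult_left_mono[of 1 a a] a_ge by simp
    then have "1 + \<bar>v\<bar> \<le> (2 * a)\<^sup>2"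
      using v_le True a_ge unfolding power2_eq_square by linarith
    then have "sqrt (1 + \<bar>v\<bar>) \<le> 2 * a"
      using a_ge by (intro real_le_lsqrt) auto
    then have "std_normal_density y * a * sqrt (1 + \<bar>v\<bar>) / sqrt t
        \<le> std_normal_density y * a * (2 * a) / sqrt t"
      using a_ge t_nonneg by (intro divide_right_mono mult_left_mono) auto
    also have "\<dots> \<le> 4 / sqrt t"
      unfolding M_eq using std_normal_density_mult_one_plus_abs_sq_le[of y] t_nonneg
      by (intro divide_right_mono) auto
    finally have "std_normal_density y * a * sqrt (1 + \<bar>v\<bar>) / sqrt t
        \<le> 4 * (indicator {v-1<..<v+1} y / sqrt \<bar>y - v\<bar>)"
      using True unfolding t_def by (simp add: indicator_def abs_less_iff)
    then show ?thesis
      unfolding a_def t_def by (rule add_increasing[rotated]) simp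
  next
    case False
    have "a \<le> a * t" "t \<le> a * t" "a * t \<le> a * (a * t)"
      using a_ge False mult_left_mono[of 1 t a] mult_right_mono[of 1 a t]
        mult_right_mono[of 1 a "a * t"]
      by auto
    then have "1 + \<bar>v\<bar> \<le> (2 * a)\<^sup>2 * t"
      using v_le unfolding power2_eq_square by (simp add: mult_ac)
    then have "sqrt (1 + \<bar>v\<bar>) / sqrt t \<le> 2 * a"
      using a_ge False real_sqrt_le_mono by (fastforce simp: real_sqrt_mult divide_le_eq)
    then have "std_normal_density y * a * (sqrt (1 + \<bar>v\<bar>) / sqrt t)
        \<le> std_normal_density y * a * (2 * a)"
      using a_ge by (intro mult_left_mono) auto
    also have "\<dots> = 2 * (std_normal_density y * (1 + \<bar>y\<bar>)\<^sup>2)"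
      by (rule M_eq)
    finally show ?thesis
      unfolding a_def t_def by (intro add_increasing2) simp_all
  qed
qed

lemma nn_integral_std_normal_weighted_inverse_sqrt_le:
  "(\<integral>\<^sup>+y. ennreal (std_normal_density y * (1 + \<bar>y\<bar>) * sqrt (1 + \<bar>v\<bar>) / sqrt \<bar>y - v\<bar>) \<partial>lborel)
    \<le> 24"
proof -
  define M where "M y = std_normal_density y * (1 + \<bar>y\<bar>)\<^sup>2" for y
  define k where "k y = indicator {v-1<..<v+1} y / sqrt \<bar>y - v\<bar>" for y :: real
  have M_nonneg: "0 \<le> M y" and k_nonneg: "0 \<le> k y" for y
    unfolding M_def k_def by simp_all
  have pointwise:
    "std_normal_density y * (1 + \<bar>y\<bar>) * sqrt (1 + \<bar>v\<bar>) / sqrt \<bar>y - v\<bar> \<le> 2 * M y + 4 * k y" for y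
    unfolding M_def k_def by (rule std_normal_weighted_inverse_sqrt_le)
  have "(\<integral>\<^sup>+y. ennreal (std_normal_density y * (1 + \<bar>y\<bar>) * sqrt (1 + \<bar>v\<bar>) / sqrt \<bar>y - v\<bar>) \<partial>lborel)
      \<le> (\<integral>\<^sup>+y. 2 * ennreal (M y) + 4 * ennreal (k y) \<partial>lborel)"
    using M_nonneg k_nonneg
    by (intro nn_integral_mono order_trans[OF ennreal_leI[OF pointwise]]) (simp add: ennreal_mult)
  also have "\<dots> = 2 * (\<integral>\<^sup>+y. ennreal (M y) \<partial>lborel) + 4 * (\<integral>\<^sup>+y. ennreal (k y) \<partial>lborel)"
    unfolding M_def k_def by (subst nn_integral_add) (auto simp: nn_integral_cmult)
  also have "\<dots> \<le> 2 * 4 + 4 * 4"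
    unfolding M_def k_def
    by (intro add_mono mult_left_mono nn_integral_std_normal_one_plus_abs_sq_le
        nn_integral_indicator_inverse_sqrt_le) auto
  finally show ?thesis by simp
qed

lemma nn_integral_std_normal_inverse_sqrt_le:
  "(\<integral>\<^sup>+y. ennreal (std_normal_density y * sqrt (1 + \<bar>v\<bar>) / sqrt \<bar>y - v\<bar>) \<partial>lborel) \<le> 24"
proof -
  have "(\<integral>\<^sup>+y. ennreal (std_normal_density y * sqrt (1 + \<bar>v\<bar>) / sqrt \<bar>y - v\<bar>) \<partial>lborel)
      \<le> (\<integral>\<^sup>+y. ennreal (std_normal_density y * (1 + \<bar>y\<bar>) * sqrt (1 + \<bar>v\<bar>) / sqrt \<bar>y - v\<bar>) \<partial>lborel)"
    by (intro nn_integral_mono ennreal_leI divide_right_mono mult_right_mono)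
       (auto simp: mult_le_cancel_left1 linorder_not_le[symmetric])
  also have "\<dots> \<le> 24"
    by (rule nn_integral_std_normal_weighted_inverse_sqrt_le)
  finally show ?thesis .
qed

definition interaction :: "real \<Rightarrow> 'a set \<Rightarrow> ('a \<Rightarrow> real) \<Rightarrow> real \<Rightarrow> real" where
  "interaction \<beta> J c y = (\<Prod>j\<in>J. \<bar>y - c j\<bar> powr \<beta>)"

lemma borel_measurable_interaction [measurable]: "interaction \<beta> J c \<in> borel_measurable borel"
  unfolding interaction_def by measurable

lemma interaction_le:
  fixes \<beta> :: real
  assumes \<beta>: "0 \<le> \<beta>" "\<beta> * card J \<le> 1"
  shows "interaction \<beta> J c y \<le> (\<Prod>j\<in>J. (1 + \<bar>c j\<bar>) powr \<beta>) * (1 + \<bar>y\<bar>)"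
proof -
  have "interaction \<beta> J c y \<le> (\<Prod>j\<in>J. (1 + \<bar>c j\<bar>) powr \<beta> * (1 + \<bar>y\<bar>) powr \<beta>)"
    unfolding interaction_def
  proof (intro prod_mono conjI)
    fix j
    have "\<bar>y - c j\<bar> \<le> (1 + \<bar>c j\<bar>) * (1 + \<bar>y\<bar>)"
      using abs_triangle_ineq4[of y "c j"] mult_nonneg_nonneg[of "\<bar>c j\<bar>" "\<bar>y\<bar>"]
      unfolding ring_distribs by linarith
    then show "\<bar>y - c j\<bar> powr \<beta> \<le> (1 + \<bar>c j\<bar>) powr \<beta> * (1 + \<bar>y\<bar>) powr \<beta>"
      using \<beta> by (simp add: powr_mono2 flip: powr_mult)
  qed simp
  also have "\<dots> = (\<Prod>j\<in>J. (1 + \<bar>c j\<bar>) powr \<beta>) * (1 + \<bar>y\<bar>) powr (card J * \<beta>)"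
    by (simp add: prod.distrib powr_power[symmetric])
  also have "\<dots> \<le> (\<Prod>j\<in>J. (1 + \<bar>c j\<bar>) powr \<beta>) * (1 + \<bar>y\<bar>)"
    using \<beta> powr_mono[of "card J * \<beta>" 1 "1 + \<bar>y\<bar>"]
    by (intro mult_left_mono) (auto simp: prod_nonneg mult.commute)
  finally show ?thesis .
qed

lemma std_normal_le_prod_ratio_powr_plus_sum:
  fixes c :: "'a \<Rightarrow> real" and \<beta> :: real
  assumes J: "finite J" and \<beta>: "0 \<le> \<beta>" and y: "y \<notin> c ` J"
  shows "std_normal_density y \<le> std_normal_density y * (\<Prod>j\<in>J. (\<bar>y - c j\<bar> / (1 + \<bar>c j\<bar>)) powr \<beta>)
    + (\<Sum>j\<in>J. 2 * \<beta> * (std_normal_density y * sqrt (1 + \<bar>c j\<bar>) / sqrt \<bar>y - c j\<bar>))"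
proof -
  have "1 \<le> (\<Prod>j\<in>J. (\<bar>y - c j\<bar> / (1 + \<bar>c j\<bar>)) powr \<beta>)
      + (\<Sum>j\<in>J. 2 * \<beta> / sqrt (\<bar>y - c j\<bar> / (1 + \<bar>c j\<bar>)))"
    using y by (intro one_le_prod_powr_plus_sum J \<beta>) (auto intro!: divide_pos_pos add_pos_nonneg)
  then have "std_normal_density y * 1 \<le> std_normal_density y * ((\<Prod>j\<in>J. (\<bar>y - c j\<bar> / (1 + \<bar>c j\<bar>)) powr \<beta>)
      + (\<Sum>j\<in>J. 2 * \<beta> / sqrt (\<bar>y - c j\<bar> / (1 + \<bar>c j\<bar>))))"
    by (intro mult_left_mono) simp_all
  then show ?thesis
    by (simp add: distrib_left sum_distrib_left real_sqrt_divide mult_ac)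
qed

lemma nn_integral_std_normal_prod_ratio_powr_ge:
  fixes c :: "'a \<Rightarrow> real" and \<beta> :: real
  assumes J: "finite J" and \<beta>: "0 \<le> \<beta>" "\<beta> * card J \<le> 1/100"
  shows "ennreal (1/2)
    \<le> (\<integral>\<^sup>+y. ennreal (std_normal_density y * (\<Prod>j\<in>J. (\<bar>y - c j\<bar> / (1 + \<bar>c j\<bar>)) powr \<beta>)) \<partial>lborel)"
proof -
  define U where "U y = std_normal_density y * (\<Prod>j\<in>J. (\<bar>y - c j\<bar> / (1 + \<bar>c j\<bar>)) powr \<beta>)" for y
  define K where "K j y = std_normal_density y * sqrt (1 + \<bar>c j\<bar>) / sqrt \<bar>y - c j\<bar>" for j y
  have U_nonneg: "0 \<le> U y" and K_nonneg: "0 \<le> K j y" for j y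
    unfolding U_def K_def by (simp_all add: prod_nonneg)
  have "AE y in lborel. y \<notin> c ` J"
    using J by (intro AE_not_in finite_imp_null_set_lborel) simp
  then have "AE y in lborel.
      ennreal (std_normal_density y) \<le> ennreal (U y) + (\<Sum>j\<in>J. ennreal (2 * \<beta>) * ennreal (K j y))"
  proof eventually_elim
    case (elim y)
    have "ennreal (std_normal_density y) \<le> ennreal (U y + (\<Sum>j\<in>J. 2 * \<beta> * K j y))"
      unfolding U_def K_def by (intro ennreal_leI std_normal_le_prod_ratio_powr_plus_sum J \<beta> elim)
    also have "\<dots> = ennreal (U y) + ennreal (\<Sum>j\<in>J. 2 * \<beta> * K j y)"
      using U_nonneg K_nonneg \<beta> by (intro ennreal_plus sum_nonneg) auto
    also have "ennreal (\<Sum>j\<in>J. 2 * \<beta> * K j y) = (\<Sum>j\<in>J. ennreal (2 * \<beta>) * ennreal (K j y))"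
      using K_nonneg \<beta> by (subst sum_ennreal[symmetric]) (auto simp: ennreal_mult)
    finally show ?case .
  qed
  then have "1 \<le> (\<integral>\<^sup>+y. ennreal (U y) + (\<Sum>j\<in>J. ennreal (2 * \<beta>) * ennreal (K j y)) \<partial>lborel)"
    using nn_integral_mono_AE by (fastforce simp: nn_integral_std_normal_density[symmetric])
  also have "\<dots> = (\<integral>\<^sup>+y. ennreal (U y) \<partial>lborel)
      + (\<Sum>j\<in>J. ennreal (2 * \<beta>) * (\<integral>\<^sup>+y. ennreal (K j y) \<partial>lborel))"
    unfolding U_def K_def by (simp add: nn_integral_add nn_integral_sum nn_integral_cmult)
  also have "\<dots> \<le> (\<integral>\<^sup>+y. ennreal (U y) \<partial>lborel) + (\<Sum>j\<in>J. ennreal (2 * \<beta>) * 24)"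
    unfolding K_def by (intro add_left_mono sum_mono mult_left_mono nn_integral_std_normal_inverse_sqrt_le) simp
  also have "(\<Sum>j\<in>J. ennreal (2 * \<beta>) * 24) = ennreal (48 * (\<beta> * card J))"
    using \<beta> ennreal_mult[of "2 * \<beta>" 24] ennreal_mult[of "real (card J)" "48 * \<beta>"]
    by (simp add: ennreal_of_nat_eq_real_of_nat mult_ac)
  also have "\<dots> \<le> ennreal (1/2)"
    using \<beta> by (intro ennreal_leI) simp
  finally have "ennreal 1 - ennreal (1/2) \<le> (\<integral>\<^sup>+y. ennreal (U y) \<partial>lborel)"
    by (simp add: ennreal_minus_le_iff add_left_mono add.commute)
  then show ?thesis
    unfolding U_def by (simp only: ennreal_minus) simp
qed

lemma nn_integral_std_normal_interaction_ge:
  fixes c :: "'a \<Rightarrow> real" and \<beta> :: real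
  assumes J: "finite J" and \<beta>: "0 \<le> \<beta>" "\<beta> * card J \<le> 1/100"
  shows "ennreal ((\<Prod>j\<in>J. (1 + \<bar>c j\<bar>) powr \<beta>) / 2)
    \<le> (\<integral>\<^sup>+y. ennreal (std_normal_density y * interaction \<beta> J c y) \<partial>lborel)"
proof -
  define P where "P = (\<Prod>j\<in>J. (1 + \<bar>c j\<bar>) powr \<beta>)"
  define R where "R y = (\<Prod>j\<in>J. (\<bar>y - c j\<bar> / (1 + \<bar>c j\<bar>)) powr \<beta>)" for y
  have P_nonneg: "0 \<le> P"
    unfolding P_def by (simp add: prod_nonneg)
  have "interaction \<beta> J c y = P * R y" for y
    unfolding interaction_def P_def R_def prod.distrib[symmetric]
  proof (intro prod.cong refl)
    fix j
    have "1 + \<bar>c j\<bar> \<noteq> 0"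
      using abs_ge_zero[of "c j"] by linarith
    then show "\<bar>y - c j\<bar> powr \<beta> = (1 + \<bar>c j\<bar>) powr \<beta> * (\<bar>y - c j\<bar> / (1 + \<bar>c j\<bar>)) powr \<beta>"
      by (simp flip: powr_mult)
  qed
  then have "(\<integral>\<^sup>+y. ennreal (std_normal_density y * interaction \<beta> J c y) \<partial>lborel)
      = ennreal P * (\<integral>\<^sup>+y. ennreal (std_normal_density y * R y) \<partial>lborel)"
    using P_nonneg unfolding R_def
    by (subst nn_integral_cmult[symmetric]) (auto simp: ennreal_mult' mult_ac intro!: nn_integral_cong)
  also have "\<dots> \<ge> ennreal P * ennreal (1/2)"
    unfolding R_def using nn_integral_std_normal_prod_ratio_powr_ge[OF J \<beta>]
    by (intro mult_left_mono) auto
  also have "ennreal P * ennreal (1/2) = ennreal (P / 2)"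
    using P_nonneg ennreal_mult[of P "1/2"] by simp
  finally show ?thesis
    unfolding P_def .
qed

lemma std_normal_abs_ln_abs_diff_div_le:
  fixes b u y :: real
  assumes b: "1 \<le> b"
  shows "std_normal_density y * \<bar>ln \<bar>u - y / b\<bar>\<bar> * (1 + \<bar>y\<bar>)
    \<le> 2 * sqrt b * (std_normal_density y * (1 + \<bar>y\<bar>) * sqrt (1 + \<bar>b * u\<bar>) / sqrt \<bar>y - b * u\<bar>)
      + ln (1 + \<bar>u\<bar>) * (std_normal_density y * (1 + \<bar>y\<bar>)\<^sup>2) + std_normal_density y * (1 + \<bar>y\<bar>)\<^sup>2"
proof -
  define p where "p = std_normal_density y * (1 + \<bar>y\<bar>)"
  have "std_normal_density y * \<bar>ln \<bar>u - y / b\<bar>\<bar> * (1 + \<bar>y\<bar>)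
      \<le> p * (2 * sqrt b / sqrt \<bar>y - b * u\<bar> + ln (1 + \<bar>u\<bar>) + \<bar>y\<bar>)"
    unfolding p_def using abs_ln_abs_diff_div_le[OF b, of u y]
    by (simp add: mult_left_mono mult_ac)
  also have "\<dots> = 2 * sqrt b * (p / sqrt \<bar>y - b * u\<bar>) + ln (1 + \<bar>u\<bar>) * p + p * \<bar>y\<bar>"
    by (simp add: algebra_simps)
  also have "\<dots> \<le> 2 * sqrt b * (p * sqrt (1 + \<bar>b * u\<bar>) / sqrt \<bar>y - b * u\<bar>)
      + ln (1 + \<bar>u\<bar>) * (p * (1 + \<bar>y\<bar>)) + p * (1 + \<bar>y\<bar>)"
    unfolding p_def using b
    by (intro add_mono mult_left_mono divide_right_mono)
       (auto simp: mult_le_cancel_left1 linorder_not_le[symmetric])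
  finally show ?thesis
    unfolding p_def by (simp add: power2_eq_square mult_ac)
qed

lemma nn_integral_std_normal_abs_ln_le:
  fixes b u :: real
  assumes b: "1 \<le> b"
  shows "(\<integral>\<^sup>+y. ennreal (std_normal_density y * \<bar>ln \<bar>u - y / b\<bar>\<bar> * (1 + \<bar>y\<bar>)) \<partial>lborel)
    \<le> ennreal (48 * sqrt b + 4 * ln (1 + \<bar>u\<bar>) + 4)"
proof -
  define K where "K y = std_normal_density y * (1 + \<bar>y\<bar>) * sqrt (1 + \<bar>b * u\<bar>) / sqrt \<bar>y - b * u\<bar>" for y
  define M where "M y = std_normal_density y * (1 + \<bar>y\<bar>)\<^sup>2" for y
  have K_nonneg: "0 \<le> K y" and M_nonneg: "0 \<le> M y" for y
    unfolding K_def M_def by simp_all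
  have pointwise:
    "std_normal_density y * \<bar>ln \<bar>u - y / b\<bar>\<bar> * (1 + \<bar>y\<bar>) \<le> 2 * sqrt b * K y + ln (1 + \<bar>u\<bar>) * M y + M y" for y
    unfolding K_def M_def by (rule std_normal_abs_ln_abs_diff_div_le[OF b])
  have "(\<integral>\<^sup>+y. ennreal (std_normal_density y * \<bar>ln \<bar>u - y / b\<bar>\<bar> * (1 + \<bar>y\<bar>)) \<partial>lborel)
      \<le> (\<integral>\<^sup>+y. ennreal (2 * sqrt b) * ennreal (K y) + ennreal (ln (1 + \<bar>u\<bar>)) * ennreal (M y) + ennreal (M y) \<partial>lborel)"
    using K_nonneg M_nonneg b
    by (intro nn_integral_mono order_trans[OF ennreal_leI[OF pointwise]]) (simp add: ennreal_mult)
  also have "\<dots> = ennreal (2 * sqrt b) * (\<integral>\<^sup>+y. ennreal (K y) \<partial>lborel)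
      + ennreal (ln (1 + \<bar>u\<bar>)) * (\<integral>\<^sup>+y. ennreal (M y) \<partial>lborel) + (\<integral>\<^sup>+y. ennreal (M y) \<partial>lborel)"
    unfolding K_def M_def by (simp add: nn_integral_add nn_integral_cmult)
  also have "\<dots> \<le> ennreal (2 * sqrt b) * 24 + ennreal (ln (1 + \<bar>u\<bar>)) * 4 + 4"
    unfolding K_def M_def
    by (intro add_mono mult_left_mono nn_integral_std_normal_weighted_inverse_sqrt_le
        nn_integral_std_normal_one_plus_abs_sq_le) auto
  also have "\<dots> = ennreal (48 * sqrt b + 4 * ln (1 + \<bar>u\<bar>) + 4)"
    using b ennreal_mult[of "2 * sqrt b" 24] ennreal_mult[of "ln (1 + \<bar>u\<bar>)" 4]
    by (simp add: mult_ac)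
  finally show ?thesis .
qed

lemma nn_integral_abs_ln_interaction_le:
  fixes c :: "'a \<Rightarrow> real" and \<beta> b u :: real
  assumes J: "finite J" and \<beta>: "0 \<le> \<beta>" "\<beta> * card J \<le> 1/100" and b: "1 \<le> b"
  shows "(\<integral>\<^sup>+y. ennreal (std_normal_density y * \<bar>ln \<bar>u - y / b\<bar>\<bar> * interaction \<beta> J c y) \<partial>lborel)
    \<le> ennreal (2 * (48 * sqrt b + 4 * ln (1 + \<bar>u\<bar>) + 4))
      * (\<integral>\<^sup>+y. ennreal (std_normal_density y * interaction \<beta> J c y) \<partial>lborel)"
proof -
  define P where "P = (\<Prod>j\<in>J. (1 + \<bar>c j\<bar>) powr \<beta>)"
  define E where "E = 48 * sqrt b + 4 * ln (1 + \<bar>u\<bar>) + 4"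
  have P_nonneg: "0 \<le> P"
    unfolding P_def by (simp add: prod_nonneg)
  have E_nonneg: "0 \<le> E"
    unfolding E_def using b by simp
  have "(\<integral>\<^sup>+y. ennreal (std_normal_density y * \<bar>ln \<bar>u - y / b\<bar>\<bar> * interaction \<beta> J c y) \<partial>lborel)
      \<le> (\<integral>\<^sup>+y. ennreal P * ennreal (std_normal_density y * \<bar>ln \<bar>u - y / b\<bar>\<bar> * (1 + \<bar>y\<bar>)) \<partial>lborel)"
  proof (intro nn_integral_mono)
    fix y
    have "std_normal_density y * \<bar>ln \<bar>u - y / b\<bar>\<bar> * interaction \<beta> J c y
        \<le> std_normal_density y * \<bar>ln \<bar>u - y / b\<bar>\<bar> * (P * (1 + \<bar>y\<bar>))"
      unfolding P_def using \<beta> by (intro mult_left_mono interaction_le) auto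
    then show "ennreal (std_normal_density y * \<bar>ln \<bar>u - y / b\<bar>\<bar> * interaction \<beta> J c y)
        \<le> ennreal P * ennreal (std_normal_density y * \<bar>ln \<bar>u - y / b\<bar>\<bar> * (1 + \<bar>y\<bar>))"
      using P_nonneg by (simp add: ennreal_mult[symmetric] ennreal_leI mult_ac)
  qed
  also have "\<dots> = ennreal P * (\<integral>\<^sup>+y. ennreal (std_normal_density y * \<bar>ln \<bar>u - y / b\<bar>\<bar> * (1 + \<bar>y\<bar>)) \<partial>lborel)"
    by (rule nn_integral_cmult) measurable
  also have "\<dots> \<le> ennreal P * ennreal E"
    unfolding E_def by (intro mult_left_mono nn_integral_std_normal_abs_ln_le b) simp
  also have "\<dots> = ennreal (2 * E) * ennreal (P / 2)"
    using P_nonneg E_nonneg by (simp add: ennreal_mult[symmetric])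
  also have "\<dots> \<le> ennreal (2 * E) * (\<integral>\<^sup>+y. ennreal (std_normal_density y * interaction \<beta> J c y) \<partial>lborel)"
    unfolding P_def by (intro mult_left_mono nn_integral_std_normal_interaction_ge J \<beta>) simp
  finally show ?thesis
    unfolding E_def .
qed

lemma borel_measurable_beta_dens [measurable]: "beta_dens n \<beta> \<in> borel_measurable (gauss_space n)"
  unfolding beta_dens_def gauss_space_def by measurable (auto intro: measurable_component_singleton)

lemma beta_dens_fun_upd_0:
  assumes n: "1 \<le> n"
  obtains R where "0 \<le> R"
    and "\<And>y. beta_dens n \<beta> (x(0 := y)) = R * (std_normal_density y * interaction \<beta> {1..<n} x y)"
proof
  define S where "S = (\<Sum>i\<in>{1..<n}. (x i)\<^sup>2)"
  define Q where "Q = (\<Prod>(i,j)\<in>{(i,j). 1 \<le> i \<and> i < j \<and> j < n}. \<bar>x i - x j\<bar> powr \<beta>)"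
  show "0 \<le> sqrt (2 * pi) * exp (- (1/2) * S) * Q"
    unfolding Q_def by (simp add: prod_nonneg case_prod_beta)
  fix y
  have lessThan: "{..<n} = insert 0 {1..<n}"
    using n by auto
  have pairs: "{(i,j). i < j \<and> j < n} = Pair 0 ` {1..<n} \<union> {(i,j). 1 \<le> i \<and> i < j \<and> j < n}"
    by auto
  have "finite {(i,j). 1 \<le> i \<and> i < j \<and> j < n}"
    by (rule finite_subset[of _ "{..<n} \<times> {..<n}"]) auto
  then have "(\<Prod>(i,j)\<in>{(i,j). i < j \<and> j < n}. \<bar>(x(0 := y)) i - (x(0 := y)) j\<bar> powr \<beta>)
      = (\<Prod>(i,j)\<in>Pair 0 ` {1..<n}. \<bar>(x(0 := y)) i - (x(0 := y)) j\<bar> powr \<beta>)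
      * (\<Prod>(i,j)\<in>{(i,j). 1 \<le> i \<and> i < j \<and> j < n}. \<bar>(x(0 := y)) i - (x(0 := y)) j\<bar> powr \<beta>)"
    unfolding pairs by (intro prod.union_disjoint) auto
  also have "\<dots> = interaction \<beta> {1..<n} x y * Q"
    unfolding interaction_def Q_def
    by (subst prod.reindex) (auto simp: inj_on_def intro!: prod.cong arg_cong2[where f = "(*)"])
  moreover have "(\<Sum>i<n. ((x(0 := y)) i)\<^sup>2) = y\<^sup>2 + S"
    unfolding lessThan S_def by (auto intro!: sum.cong)
  ultimately show "beta_dens n \<beta> (x(0 := y))
      = sqrt (2 * pi) * exp (- (1/2) * S) * Q * (std_normal_density y * interaction \<beta> {1..<n} x y)"
    unfolding beta_dens_def std_normal_density_def
    by (simp add: exp_add[symmetric] algebra_simps)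
qed

lemma ennreal_divide_le_of_le_mult:
  fixes a b c :: ennreal
  assumes "a \<le> c * b"
  shows "a / b \<le> c"
proof (cases "b = 0")
  case True
  then show ?thesis
    using assms by simp
next
  case False
  then show ?thesis
    using assms by (intro divide_le_posI_ennreal) (auto simp: mult.commute zero_less_iff_neq_zero)
qed

lemma beta_expect_le_of_conditional_le:
  fixes g :: "(nat \<Rightarrow> real) \<Rightarrow> real"
  assumes n: "1 \<le> n" and g: "g \<in> borel_measurable (gauss_space n)"
    and conditional: "\<And>x. (\<integral>\<^sup>+y. ennreal (g (x(0 := y)) * beta_dens n \<beta> (x(0 := y))) \<partial>lborel)
      \<le> C * (\<integral>\<^sup>+y. ennreal (beta_dens n \<beta> (x(0 := y))) \<partial>lborel)"
  shows "beta_expect n \<beta> g \<le> C"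
proof -
  interpret product_sigma_finite "\<lambda>_::nat. lborel :: real measure"
    by (simp add: product_sigma_finite_def sigma_finite_lborel)
  have "{..<n} = insert 0 {1..<n}"
    using n by auto
  then have gauss: "gauss_space n = Pi\<^sub>M (insert 0 {1..<n}) (\<lambda>_. lborel)"
    unfolding gauss_space_def by simp
  have [measurable]: "g \<in> borel_measurable (Pi\<^sub>M (insert 0 {1..<n}) (\<lambda>_. lborel))"
    and [measurable]: "beta_dens n \<beta> \<in> borel_measurable (Pi\<^sub>M (insert 0 {1..<n}) (\<lambda>_. lborel))"
    using g borel_measurable_beta_dens[of n \<beta>] unfolding gauss by auto
  have "(\<integral>\<^sup>+l. ennreal (g l * beta_dens n \<beta> l) \<partial>gauss_space n)
      = (\<integral>\<^sup>+x. (\<integral>\<^sup>+y. ennreal (g (x(0 := y)) * beta_dens n \<beta> (x(0 := y))) \<partial>lborel) \<partial>Pi\<^sub>M {1..<n} (\<lambda>_. lborel))"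
    unfolding gauss by (rule product_nn_integral_insert) (simp, simp, measurable)
  also have "\<dots> \<le> (\<integral>\<^sup>+x. (\<integral>\<^sup>+y. C * ennreal (beta_dens n \<beta> (x(0 := y))) \<partial>lborel) \<partial>Pi\<^sub>M {1..<n} (\<lambda>_. lborel))"
  proof (rule nn_integral_mono)
    fix x
    assume "x \<in> space (Pi\<^sub>M {1..<n} (\<lambda>_. lborel :: real measure))"
    then have [measurable]: "(\<lambda>y. x(0 := y)) \<in> lborel \<rightarrow>\<^sub>M Pi\<^sub>M (insert 0 {1..<n}) (\<lambda>_. lborel)"
      by (rule measurable_component_update) simp
    show "(\<integral>\<^sup>+y. ennreal (g (x(0 := y)) * beta_dens n \<beta> (x(0 := y))) \<partial>lborel)
        \<le> (\<integral>\<^sup>+y. C * ennreal (beta_dens n \<beta> (x(0 := y))) \<partial>lborel)"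
      using conditional[of x] by (subst nn_integral_cmult) auto
  qed
  also have "\<dots> = (\<integral>\<^sup>+l. C * ennreal (beta_dens n \<beta> l) \<partial>gauss_space n)"
    unfolding gauss by (rule product_nn_integral_insert[symmetric]) (simp, simp, measurable)
  also have "\<dots> = C * beta_Z n \<beta>"
    unfolding beta_Z_def by (rule nn_integral_cmult) measurable
  finally show ?thesis
    unfolding beta_expect_def by (rule ennreal_divide_le_of_le_mult)
qed

lemma beta_expect_abs_ln_le:
  fixes \<beta> B u :: real
  assumes n: "1 \<le> n" and \<beta>: "0 \<le> \<beta>" "\<beta> * (n - 1) \<le> 1/100" and B: "1 \<le> B"
  shows "beta_expect n \<beta> (\<lambda>l. \<bar>ln \<bar>u - l 0 / B\<bar>\<bar>) \<le> ennreal (2 * (48 * sqrt B + 4 * ln (1 + \<bar>u\<bar>) + 4))"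
proof (rule beta_expect_le_of_conditional_le[OF n])
  show "(\<lambda>l. \<bar>ln \<bar>u - l 0 / B\<bar>\<bar>) \<in> borel_measurable (gauss_space n)"
    unfolding gauss_space_def by measurable (use n in auto)
  fix x
  obtain R where R: "0 \<le> R"
    "\<And>y. beta_dens n \<beta> (x(0 := y)) = R * (std_normal_density y * interaction \<beta> {1..<n} x y)"
    using beta_dens_fun_upd_0[OF n] by blast
  have density: "(\<integral>\<^sup>+y. ennreal (beta_dens n \<beta> (x(0 := y))) \<partial>lborel)
      = ennreal R * (\<integral>\<^sup>+y. ennreal (std_normal_density y * interaction \<beta> {1..<n} x y) \<partial>lborel)"
    using R by (subst nn_integral_cmult[symmetric]) (auto simp: ennreal_mult' intro!: nn_integral_cong)
  have "(\<integral>\<^sup>+y. ennreal (\<bar>ln \<bar>u - (x(0 := y)) 0 / B\<bar>\<bar> * beta_dens n \<beta> (x(0 := y))) \<partial>lborel)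
      = ennreal R * (\<integral>\<^sup>+y. ennreal (std_normal_density y * \<bar>ln \<bar>u - y / B\<bar>\<bar> * interaction \<beta> {1..<n} x y) \<partial>lborel)"
    using R by (subst nn_integral_cmult[symmetric]) (auto simp: ennreal_mult' mult_ac intro!: nn_integral_cong)
  also have "\<dots> \<le> ennreal R * (ennreal (2 * (48 * sqrt B + 4 * ln (1 + \<bar>u\<bar>) + 4))
      * (\<integral>\<^sup>+y. ennreal (std_normal_density y * interaction \<beta> {1..<n} x y) \<partial>lborel))"
    using n \<beta> B by (intro mult_left_mono nn_integral_abs_ln_interaction_le) auto
  also have "\<dots> = ennreal (2 * (48 * sqrt B + 4 * ln (1 + \<bar>u\<bar>) + 4))
      * (\<integral>\<^sup>+y. ennreal (beta_dens n \<beta> (x(0 := y))) \<partial>lborel)"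
    unfolding density by (simp add: mult_ac)
  finally show "(\<integral>\<^sup>+y. ennreal (\<bar>ln \<bar>u - (x(0 := y)) 0 / B\<bar>\<bar> * beta_dens n \<beta> (x(0 := y))) \<partial>lborel)
      \<le> ennreal (2 * (48 * sqrt B + 4 * ln (1 + \<bar>u\<bar>) + 4)) * (\<integral>\<^sup>+y. ennreal (beta_dens n \<beta> (x(0 := y))) \<partial>lborel)" .
qed

lemma eventually_edge_scaling_bounds:
  fixes N :: "nat \<Rightarrow> real"
  assumes "(\<lambda>n. N n / ln (real n)) \<longlonglongrightarrow> 0"
  shows "\<forall>\<^sub>F n in sequentially. 1 \<le> sqrt (2 * ln (real n)) - N n / (2 * sqrt (2 * ln (real n)))
    \<and> sqrt (2 * ln (real n)) - N n / (2 * sqrt (2 * ln (real n))) \<le> 2 * ln (real n)"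
proof -
  have "\<forall>\<^sub>F n in sequentially. 2 \<le> ln (real n)"
    by real_asymp
  moreover have "\<forall>\<^sub>F n in sequentially. \<bar>N n / ln (real n)\<bar> < 1"
    using tendstoD[OF assms, of 1] by (simp add: dist_real_def)
  ultimately show ?thesis
  proof eventually_elim
    case (elim n)
    define L s where "L = ln (real n)" and "s = sqrt (2 * L)"
    have L: "2 \<le> L" and ratio: "\<bar>N n / L\<bar> < 1"
      using elim unfolding L_def by simp_all
    have "sqrt 4 \<le> s"
      unfolding s_def using L by (intro real_sqrt_le_mono) simp
    then have s_ge: "2 \<le> s"
      by simp
    have s_le: "s \<le> L"
      unfolding s_def using L by (intro real_le_lsqrt) (auto simp: power2_eq_square)
    have L_eq: "L = s\<^sup>2 / 2"
      unfolding s_def using L by simp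
    have "N n / (2 * s) = (N n / L) * (s / 4)"
      using s_ge unfolding L_eq by (simp add: field_simps power2_eq_square)
    then have "\<bar>N n / (2 * s)\<bar> \<le> s / 4"
      using ratio s_ge mult_right_mono[of "\<bar>N n / L\<bar>" 1 "s / 4"] by (simp add: abs_mult)
    then show ?case
      unfolding L_def[symmetric] s_def[symmetric] using s_ge s_le L abs_le_iff
      by (intro conjI) linarith+
  qed
qed

lemma ln_one_plus_abs_one_plus_div_le:
  fixes d q x :: real
  assumes d: "0 < d" and q: "1 \<le> q"
  shows "ln (1 + \<bar>1 + x / (d * q)\<bar>) \<le> ln (2 + \<bar>x\<bar>) + ln 2 + \<bar>ln d\<bar>"
proof -
  have "\<bar>x / (d * q)\<bar> \<le> \<bar>x\<bar> / d"
    using d q by (simp add: abs_mult divide_left_mono mult_le_cancel_left1)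
  then have "1 + \<bar>1 + x / (d * q)\<bar> \<le> 2 + \<bar>x\<bar> / d"
    using abs_triangle_ineq[of 1 "x / (d * q)"] by simp
  also have "\<dots> \<le> (2 + \<bar>x\<bar>) * (1 + 1 / d)"
    using d by (simp add: algebra_simps)
  also have "\<dots> \<le> (2 + \<bar>x\<bar>) * (2 * exp \<bar>ln d\<bar>)"
  proof (intro mult_left_mono)
    have "1 / d = exp (- ln d)"
      using d by (simp add: exp_minus inverse_eq_divide)
    moreover have "exp (- ln d) \<le> exp \<bar>ln d\<bar>" and "1 \<le> exp \<bar>ln d\<bar>"
      by simp_all
    ultimately show "1 + 1 / d \<le> 2 * exp \<bar>ln d\<bar>"
      by linarith
  qed simp
  finally have "1 + \<bar>1 + x / (d * q)\<bar> \<le> (2 + \<bar>x\<bar>) * (2 * exp \<bar>ln d\<bar>)" .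
  then have "ln (1 + \<bar>1 + x / (d * q)\<bar>) \<le> ln ((2 + \<bar>x\<bar>) * (2 * exp \<bar>ln d\<bar>))"
    by (simp add: add_pos_nonneg)
  also have "\<dots> = ln (2 + \<bar>x\<bar>) + ln 2 + \<bar>ln d\<bar>"
    by (simp add: ln_mult_pos add_pos_nonneg)
  finally show ?thesis .
qed

lemma tendsto_mult_ln_ratio_zero:
  fixes \<beta> f :: "nat \<Rightarrow> real"
  assumes \<beta>: "(\<lambda>n. real n * ln (real n) * \<beta> n) \<longlonglongrightarrow> 0"
    and f: "(\<lambda>n. f n / ln (real n)) \<longlonglongrightarrow> c"
  shows "(\<lambda>n. real n * \<beta> n * f n) \<longlonglongrightarrow> 0"
proof -
  have "(\<lambda>n. (real n * ln (real n) * \<beta> n) * (f n / ln (real n))) \<longlonglongrightarrow> 0 * c"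
    by (rule tendsto_mult[OF \<beta> f])
  moreover have "\<forall>\<^sub>F n in sequentially.
      (real n * ln (real n) * \<beta> n) * (f n / ln (real n)) = real n * \<beta> n * f n"
    using eventually_gt_at_top[of 1] by eventually_elim simp
  ultimately show ?thesis
    by (auto intro: Lim_transform_eventually)
qed

lemma tendsto_mult_log_bound_zero:
  fixes \<beta> \<delta> :: "nat \<Rightarrow> real"
  assumes \<beta>: "(\<lambda>n. real n * ln (real n) * \<beta> n) \<longlonglongrightarrow> 0"
    and \<delta>: "(\<lambda>n. ln (\<delta> n) / ln (real n)) \<longlonglongrightarrow> 0"
  shows "(\<lambda>n. real n * \<beta> n * (A * ln (real n) + B * \<bar>ln (\<delta> n)\<bar> + C)) \<longlonglongrightarrow> 0"
proof (rule tendsto_mult_ln_ratio_zero[OF \<beta>])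
  have "(\<lambda>n. A + B * \<bar>ln (\<delta> n) / ln (real n)\<bar> + C * (1 / ln (real n))) \<longlonglongrightarrow> A + B * 0 + C * 0"
    by (intro tendsto_intros tendsto_rabs_zero \<delta>) real_asymp
  moreover have "\<forall>\<^sub>F n in sequentially. A + B * \<bar>ln (\<delta> n) / ln (real n)\<bar> + C * (1 / ln (real n))
      = (A * ln (real n) + B * \<bar>ln (\<delta> n)\<bar> + C) / ln (real n)"
    using eventually_gt_at_top[of 1] by eventually_elim (simp add: field_simps)
  ultimately show "(\<lambda>n. (A * ln (real n) + B * \<bar>ln (\<delta> n)\<bar> + C) / ln (real n)) \<longlonglongrightarrow> A"
    by (auto intro: Lim_transform_eventually)
qed

lemma scaled_beta_expect_edge_le:
  fixes \<beta> d B x :: real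
  assumes n: "1 \<le> n" and \<beta>: "0 \<le> \<beta>" "real n * \<beta> < 1/100" and d: "0 < d"
    and B: "1 \<le> B" "B \<le> 2 * ln (real n)"
  shows "ennreal (real n * \<beta>) * beta_expect n \<beta> (\<lambda>l. \<bar>ln \<bar>1 + x / (d * sqrt (2 * ln (real n)) * B) - l 0 / B\<bar>\<bar>)
    \<le> ennreal (real n * \<beta> * (192 * ln (real n) + 8 * \<bar>ln d\<bar> + 8 * (ln (2 + \<bar>x\<bar>) + ln 2 + 1)))"
proof -
  have "1 \<le> sqrt (2 * ln (real n))"
    using B by simp
  then have "1 \<le> sqrt (2 * ln (real n)) * B"
    using B mult_mono[of 1 "sqrt (2 * ln (real n))" 1 B] by simp
  then have ln_u: "ln (1 + \<bar>1 + x / (d * sqrt (2 * ln (real n)) * B)\<bar>) \<le> ln (2 + \<bar>x\<bar>) + ln 2 + \<bar>ln d\<bar>"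
    using ln_one_plus_abs_one_plus_div_le[OF d] by (simp add: mult.assoc)
  have "sqrt B \<le> B"
    using B by (intro real_le_lsqrt) (auto simp: power2_eq_square mult_le_cancel_left1)
  have "\<beta> * (real n - 1) \<le> 1/100"
    using \<beta> by (simp add: algebra_simps)
  then have "beta_expect n \<beta> (\<lambda>l. \<bar>ln \<bar>1 + x / (d * sqrt (2 * ln (real n)) * B) - l 0 / B\<bar>\<bar>)
      \<le> ennreal (2 * (48 * sqrt B + 4 * ln (1 + \<bar>1 + x / (d * sqrt (2 * ln (real n)) * B)\<bar>) + 4))"
    by (rule beta_expect_abs_ln_le[OF n \<beta>(1) _ B(1)])
  also have "\<dots> \<le> ennreal (192 * ln (real n) + 8 * \<bar>ln d\<bar> + 8 * (ln (2 + \<bar>x\<bar>) + ln 2 + 1))"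
    using ln_u \<open>sqrt B \<le> B\<close> B(2) unfolding distrib_left by (intro ennreal_leI) linarith
  finally show ?thesis
    using \<beta>(1) n by (simp add: ennreal_mult' mult_left_mono)
qed

theorem lemma3p4:
  fixes \<delta> \<beta> :: "nat \<Rightarrow> real" and x :: real
  assumes \<delta>_pos: "\<And>n. \<delta> n > 0"
    and \<delta>_lim: "(\<lambda>n. ln (\<delta> n) / ln (real n)) \<longlonglongrightarrow> 0"
    and \<beta>_nonneg: "\<And>n. \<beta> n \<ge> 0"
    and \<beta>_lim: "(\<lambda>n. real n * ln (real n) * \<beta> n) \<longlonglongrightarrow> 0"
  defines "a \<equiv> (\<lambda>n. \<delta> n * sqrt (2 * ln (real n)))"
    and "b \<equiv> (\<lambda>n. sqrt (2 * ln (real n)) -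
            (ln (ln (real n)) + 2 * ln (\<delta> n) + ln (4 * pi)) / (2 * sqrt (2 * ln (real n))))"
  shows "(\<lambda>n. ennreal (real n * \<beta> n) *
            beta_expect n (\<beta> n) (\<lambda>l. \<bar>ln \<bar>1 + x / (a n * b n) - l 0 / b n\<bar>\<bar>))
         \<longlonglongrightarrow> 0"
proof -
  define K where "K = ln (2 + \<bar>x\<bar>) + ln 2 + 1"
  have "(\<lambda>n. ln (ln (real n)) / ln (real n) + 2 * (ln (\<delta> n) / ln (real n)) + ln (4 * pi) * (1 / ln (real n)))
      \<longlonglongrightarrow> 0 + 2 * 0 + ln (4 * pi) * 0"
    by (intro tendsto_add tendsto_mult tendsto_const \<delta>_lim) real_asymp+
  then have "\<forall>\<^sub>F n in sequentially. 1 \<le> b n \<and> b n \<le> 2 * ln (real n)"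
    unfolding b_def by (intro eventually_edge_scaling_bounds) (simp add: add_divide_distrib)
  moreover have "(\<lambda>n. real n * \<beta> n * (0 * ln (real n) + 0 * \<bar>ln (\<delta> n)\<bar> + 1)) \<longlonglongrightarrow> 0"
    by (rule tendsto_mult_log_bound_zero[OF \<beta>_lim \<delta>_lim])
  then have "\<forall>\<^sub>F n in sequentially. real n * \<beta> n < 1/100"
    by (auto dest: order_tendstoD(2)[of _ 0 _ "1/100"])
  ultimately have bound: "\<forall>\<^sub>F n in sequentially.
      ennreal (real n * \<beta> n) * beta_expect n (\<beta> n) (\<lambda>l. \<bar>ln \<bar>1 + x / (a n * b n) - l 0 / b n\<bar>\<bar>)
      \<le> ennreal (real n * \<beta> n * (192 * ln (real n) + 8 * \<bar>ln (\<delta> n)\<bar> + 8 * K))"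
    using eventually_ge_at_top[of 1]
    by eventually_elim (unfold a_def K_def, rule scaled_beta_expect_edge_le, auto intro: \<beta>_nonneg \<delta>_pos)
  have "(\<lambda>n. ennreal (real n * \<beta> n * (192 * ln (real n) + 8 * \<bar>ln (\<delta> n)\<bar> + 8 * K))) \<longlonglongrightarrow> 0"
    using tendsto_ennrealI[OF tendsto_mult_log_bound_zero[OF \<beta>_lim \<delta>_lim]] by simp
  then show ?thesis
    by (intro tendsto_sandwich[OF _ bound tendsto_const]) simp_all
qed

end
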